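(* Let $G$ be a compact abelian group and let $G^0$ denote the connected component of the identity in $G$. If $G/G^0$ is infinite, then $\lambda(G)=0$.
   Context: For a compact abelian group $G$ with normalized Haar measure $\mu$ and (multiplicative) dual group of characters $\widehat{G}$, let $\mathbb{Z}[\widehat{G}]$ denote the ring of integral linear combinations of characters, regarded as functions on $G$. For $f\in\mathbb{Z}[\widehat{G}]$, the logarithmic Mahler measure over $G$ is $\mathsf{m}_G(f)=\int_G\log|f|\,d\mu$ (with $\log 0=-\infty$, so this may equal $-\infty$). The Lehmer constant of $G$ is $\lambda(G)=\inf\{\mathsf{m}_G(f): f\in\mathbb{Z}[\widehat{G}],\ \mathsf{m}_G(f)>0\}$. *)

theory Defs
  imports "HOL-Analysis.Analysis" "HOL-Probability.Probability"
begin

text \<open>A compact abelian group is modelled as a type of class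
  topological_ab_group_add + t2_space whose universe is compact
  (group operation written additively).\<close>

definition haar_prob :: "'a::topological_ab_group_add measure \<Rightarrow> bool" where
  "haar_prob M \<longleftrightarrow> prob_space M \<and> sets M = sets borel \<and>
     (\<forall>g. \<forall>A\<in>sets borel. measure M ((\<lambda>x. g + x) ` A) = measure M A)"

definition character :: "('a::topological_ab_group_add \<Rightarrow> complex) \<Rightarrow> bool" where
  "character ch \<longleftrightarrow> continuous_on UNIV ch \<and>
     (\<forall>x y. ch (x + y) = ch x * ch y) \<and> (\<forall>x. norm (ch x) = 1)"

text \<open>The ring Z[dual G] of integral linear combinations of characters, as functions on G.\<close>
definition int_char_poly :: "('a::topological_ab_group_add \<Rightarrow> complex) set" where
  "int_char_poly = {f. \<exists>S (c :: ('a \<Rightarrow> complex) \<Rightarrow> int). finite S \<and>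
       (\<forall>ch\<in>S. character ch) \<and> f = (\<lambda>x. \<Sum>ch\<in>S. of_int (c ch) * ch x)}"

text \<open>Logarithmic Mahler measure m_G(f) = integral of log|f| with log 0 = -infinity.
  Since |f| is bounded, log|f| is bounded above; hence the integral is
  -infinity exactly when f vanishes on a set of positive measure or log|f|
  is not integrable.\<close>
definition mahler :: "'a measure \<Rightarrow> ('a \<Rightarrow> complex) \<Rightarrow> ereal" where
  "mahler M f = (if (AE x in M. f x \<noteq> 0) \<and> integrable M (\<lambda>x. ln (norm (f x)))
                 then ereal (integral\<^sup>L M (\<lambda>x. ln (norm (f x)))) else -\<infinity>)"

definition lehmer_const :: "'a::topological_ab_group_add measure \<Rightarrow> ereal" where
  "lehmer_const M = Inf {mahler M f | f. f \<in> int_char_poly \<and> mahler M f > 0}"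

end

theory Submission
  imports Defs "HOL-Real_Asymp.Real_Asymp"
begin

(*
  Components of a compact Hausdorff space are quasi-components, and every compact open
  neighbourhood of 0 contains an open subgroup.  Hence, if G has infinitely many components,
  then for every N there is an open subgroup U with at least N cosets.  Such a U has finite
  index, and a circle-valued homomorphism on a subgroup of finite index extends to all of G
  (adjoin one element at a time, taking roots in the circle).  So the characters trivial on U
  separate the points of G/U, and their sum is n times the indicator of U, where n is their
  number.  Integrating against Haar measure gives n * mu(U) = 1, hence n >= N.  The
  polynomial f = 1 + (sum of these characters) has |f| = 1 + n on U and 1 elsewhere, so
  m(f) = log(1 + n) / n, which is positive and tends to 0 as n grows.
*)

section \<open>Subgroups of finite index\<close>

definition add_subgroup :: "'a::ab_group_add set \<Rightarrow> bool" where
  "add_subgroup H \<longleftrightarrow> 0 \<in> H \<and> (\<forall>x\<in>H. \<forall>y\<in>H. x - y \<in> H)"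

lemma add_subgroup_0: "add_subgroup H \<Longrightarrow> 0 \<in> H"
  by (simp add: add_subgroup_def)

lemma add_subgroup_diff: "add_subgroup H \<Longrightarrow> x \<in> H \<Longrightarrow> y \<in> H \<Longrightarrow> x - y \<in> H"
  by (simp add: add_subgroup_def)

lemma add_subgroup_uminus: "add_subgroup H \<Longrightarrow> x \<in> H \<Longrightarrow> - x \<in> H"
  using add_subgroup_diff[of H 0 x] add_subgroup_0[of H] by simp

lemma add_subgroup_add: "add_subgroup H \<Longrightarrow> x \<in> H \<Longrightarrow> y \<in> H \<Longrightarrow> x + y \<in> H"
  using add_subgroup_diff[of H x "- y"] add_subgroup_uminus[of H y] by simp

lemma add_subgroup_UNIV: "add_subgroup UNIV"
  by (simp add: add_subgroup_def)

lemma add_subgroup_Inter: "(\<And>H. H \<in> \<H> \<Longrightarrow> add_subgroup H) \<Longrightarrow> add_subgroup (\<Inter>\<H>)"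
  unfolding add_subgroup_def by blast

primrec nsmul :: "nat \<Rightarrow> 'a::monoid_add \<Rightarrow> 'a" where
  "nsmul 0 g = 0"
| "nsmul (Suc n) g = g + nsmul n g"

lemma nsmul_add: "nsmul (m + n) g = nsmul m g + nsmul n g"
  by (induction m) (simp_all add: add.assoc)

lemma nsmul_mult: "nsmul (m * n) g = nsmul m (nsmul n g)"
  by (induction m) (simp_all add: nsmul_add)

lemma nsmul_diff: "m \<le> n \<Longrightarrow> nsmul n g - nsmul m g = nsmul (n - m) (g :: 'a::group_add)"
  using nsmul_add[of "n - m" m g] by simp

lemma add_subgroup_nsmul: "add_subgroup H \<Longrightarrow> g \<in> H \<Longrightarrow> nsmul n g \<in> H"
  by (induction n) (simp_all add: add_subgroup_0 add_subgroup_add)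

definition finite_index :: "'a::ab_group_add set \<Rightarrow> bool" where
  "finite_index H \<longleftrightarrow> (\<exists>R. finite R \<and> (\<forall>x. \<exists>r\<in>R. x - r \<in> H))"

lemma finite_index_mono: "finite_index H \<Longrightarrow> H \<subseteq> H' \<Longrightarrow> finite_index H'"
  unfolding finite_index_def by (meson subsetD)

text \<open>Pigeonhole: the multiples of \<open>g\<close> cannot lie in pairwise distinct cosets.\<close>

lemma finite_index_nsmul_mem:
  assumes H: "add_subgroup H" "finite_index H"
  obtains k where "0 < k" "nsmul k g \<in> H"
proof -
  obtain R where "finite R" and "\<forall>x. \<exists>r\<in>R. x - r \<in> H"
    using H(2) unfolding finite_index_def by auto
  then obtain \<rho> where \<rho>: "\<And>x. \<rho> x \<in> R" "\<And>x. x - \<rho> x \<in> H"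
    by metis
  have "\<not> inj (\<lambda>j. \<rho> (nsmul j g))"
  proof
    assume "inj (\<lambda>j. \<rho> (nsmul j g))"
    moreover have "range (\<lambda>j. \<rho> (nsmul j g)) \<subseteq> R"
      using \<rho>(1) by blast
    ultimately have "finite (UNIV :: nat set)"
      using \<open>finite R\<close> finite_imageD finite_subset by blast
    then show False
      by simp
  qed
  then obtain i j where ij: "i < j" "\<rho> (nsmul i g) = \<rho> (nsmul j g)"
    unfolding inj_def by (metis linorder_neqE_nat)
  have "(nsmul j g - \<rho> (nsmul j g)) - (nsmul i g - \<rho> (nsmul i g)) \<in> H"
    using \<rho>(2) H(1) by (blast intro: add_subgroup_diff)
  then have "nsmul (j - i) g \<in> H"
    using ij nsmul_diff[of i j g] by (simp add: algebra_simps)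
  then show thesis
    using that[of "j - i"] ij(1) by simp
qed

text \<open>The order of \<open>g + H\<close> in \<open>G / H\<close>; unspecified if that order is infinite.\<close>

definition order_mod :: "'a::ab_group_add set \<Rightarrow> 'a \<Rightarrow> nat" where
  "order_mod H g = (LEAST k. 0 < k \<and> nsmul k g \<in> H)"

lemma order_mod:
  assumes "add_subgroup H" "finite_index H"
  shows "0 < order_mod H g" "nsmul (order_mod H g) g \<in> H"
proof -
  obtain k where "0 < k \<and> nsmul k g \<in> H"
    using finite_index_nsmul_mem[OF assms] by blast
  then have "0 < order_mod H g \<and> nsmul (order_mod H g) g \<in> H"
    unfolding order_mod_def by (rule LeastI)
  then show "0 < order_mod H g" "nsmul (order_mod H g) g \<in> H"
    by blast+
qed

lemma nsmul_mem_iff_order_mod_dvd: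
  assumes H: "add_subgroup H" "finite_index H"
  shows "nsmul d g \<in> H \<longleftrightarrow> order_mod H g dvd d"
proof
  let ?k = "order_mod H g"
  assume d: "nsmul d g \<in> H"
  have "nsmul (d div ?k * ?k) g \<in> H"
    using add_subgroup_nsmul[OF H(1) order_mod(2)[OF H]] by (simp only: nsmul_mult)
  then have "nsmul d g - nsmul (d div ?k * ?k) g \<in> H"
    using d H(1) by (blast intro: add_subgroup_diff)
  moreover have "nsmul d g - nsmul (d div ?k * ?k) g = nsmul (d mod ?k) g"
    by (simp add: nsmul_diff minus_div_mult_eq_mod)
  moreover have "d mod ?k < ?k"
    using order_mod(1)[OF H] by simp
  ultimately have "d mod ?k = 0"
    unfolding order_mod_def by (metis (mono_tags, lifting) gr0I not_less_Least)
  then show "?k dvd d"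
    by (simp add: dvd_eq_mod_eq_0)
next
  assume "order_mod H g dvd d"
  then obtain q where "d = q * order_mod H g"
    by (metis dvd_def mult.commute)
  then show "nsmul d g \<in> H"
    using add_subgroup_nsmul[OF H(1) order_mod(2)[OF H]] by (simp only: nsmul_mult)
qed


section \<open>Extending circle-valued homomorphisms\<close>

definition circle_hom_on :: "'a::ab_group_add set \<Rightarrow> ('a \<Rightarrow> complex) \<Rightarrow> bool" where
  "circle_hom_on H c \<longleftrightarrow> (\<forall>a\<in>H. \<forall>b\<in>H. c (a + b) = c a * c b) \<and> (\<forall>a\<in>H. norm (c a) = 1)"

lemma circle_hom_on_0:
  assumes "add_subgroup H" "circle_hom_on H c"
  shows "c 0 = 1"
proof -
  have "c 0 = c 0 * c 0" "c 0 \<noteq> 0"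
    using assms add_subgroup_0[of H] unfolding circle_hom_on_def by (metis add_0, force)
  then show ?thesis
    by simp
qed

lemma circle_hom_on_nsmul:
  assumes "add_subgroup H" "circle_hom_on H c" "y \<in> H"
  shows "c (nsmul n y) = c y ^ n"
  using assms add_subgroup_nsmul[OF assms(1,3)]
  by (induction n) (auto simp: circle_hom_on_0 circle_hom_on_def)

definition add_subgroup_adjoin :: "'a::ab_group_add set \<Rightarrow> 'a \<Rightarrow> 'a set" where
  "add_subgroup_adjoin H g = {h + nsmul j g |h j. h \<in> H}"

lemma subset_add_subgroup_adjoin: "H \<subseteq> add_subgroup_adjoin H g"
  unfolding add_subgroup_adjoin_def by (force intro: exI[of _ 0])

lemma add_subgroup_adjoin_self: "add_subgroup H \<Longrightarrow> g \<in> add_subgroup_adjoin H g"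
  unfolding add_subgroup_adjoin_def by (force intro: exI[of _ 1] add_subgroup_0)

lemma add_subgroup_adjoin:
  assumes H: "add_subgroup H" "finite_index H"
  shows "add_subgroup (add_subgroup_adjoin H g)"
  unfolding add_subgroup_def
proof (intro conjI ballI)
  show "0 \<in> add_subgroup_adjoin H g"
    using subset_add_subgroup_adjoin add_subgroup_0[OF H(1)] by blast
next
  fix x y
  assume "x \<in> add_subgroup_adjoin H g" "y \<in> add_subgroup_adjoin H g"
  then obtain h1 h2 j1 j2 where h: "h1 \<in> H" "h2 \<in> H" "x = h1 + nsmul j1 g" "y = h2 + nsmul j2 g"
    unfolding add_subgroup_adjoin_def by blast
  let ?k = "order_mod H g"
  \<comment> \<open>\<open>- j2 g = (k - 1) j2 g - k j2 g\<close> with \<open>k j2 g \<in> H\<close>\<close>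
  have "j2 * ?k = (?k - 1) * j2 + j2"
    using order_mod(1)[OF H, of g] by (cases ?k) simp_all
  then have "nsmul j2 (nsmul ?k g) = nsmul ((?k - 1) * j2) g + nsmul j2 g"
    by (metis nsmul_add nsmul_mult)
  then have "x - y = (h1 - h2 - nsmul j2 (nsmul ?k g)) + nsmul (j1 + (?k - 1) * j2) g"
    unfolding h nsmul_add by (simp add: algebra_simps)
  moreover have "h1 - h2 - nsmul j2 (nsmul ?k g) \<in> H"
    using h add_subgroup_nsmul[OF H(1) order_mod(2)[OF H]] by (blast intro: add_subgroup_diff[OF H(1)])
  ultimately show "x - y \<in> add_subgroup_adjoin H g"
    unfolding add_subgroup_adjoin_def by blast
qed

lemma norm_eq_1_if_power_eq_1:
  fixes z :: complex
  assumes "z ^ k = w" "norm w = 1" "0 < k"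
  shows "norm z = 1"
proof -
  have "norm z ^ k = 1"
    using assms(1,2) by (simp add: norm_power[symmetric])
  then show ?thesis
    using power_eq_1_iff[of "norm z" k] assms(3) by simp
qed

lemma exists_unimodular_root:
  fixes w :: complex
  assumes "0 < k" "norm w = 1"
  obtains z where "z ^ k = w" "norm z = 1"
proof -
  have "0 < card {z. z ^ k = w}"
    using assms by (subst card_nth_roots) auto
  then obtain z where "z ^ k = w"
    by (auto simp: card_gt_0_iff)
  then show thesis
    using that assms norm_eq_1_if_power_eq_1 by blast
qed

lemma exists_nontrivial_root_of_unity:
  assumes "2 \<le> k"
  obtains z :: complex where "z ^ k = 1" "z \<noteq> 1"
proof -
  have "card {z :: complex. z ^ k = 1} = k"
    using assms by (intro card_roots_unity_eq) auto
  then have "\<not> {z :: complex. z ^ k = 1} \<subseteq> {1}"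
    using assms card_mono[of "{1}" "{z :: complex. z ^ k = 1}"] by auto
  then show thesis
    using that by blast
qed

lemma circle_hom_on_adjoin_well_defined:
  assumes H: "add_subgroup H" "finite_index H" and c: "circle_hom_on H c"
    and z: "z ^ order_mod H g = c (nsmul (order_mod H g) g)"
    and h: "h \<in> H" "h' \<in> H" and eq: "h + nsmul j g = h' + nsmul j' g"
  shows "c h * z ^ j = c h' * z ^ j'"
proof -
  have *: "c h * z ^ j = c h' * z ^ j'"
    if h: "h \<in> H" "h' \<in> H" and eq: "h + nsmul j g = h' + nsmul j' g" and "j' \<le> j" for h h' j j'
  proof -
    let ?k = "order_mod H g"
    have "h' = h + nsmul (j - j') g"
      using eq nsmul_diff[OF \<open>j' \<le> j\<close>, of g] by (simp add: algebra_simps)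
    then have "nsmul (j - j') g \<in> H"
      using add_subgroup_diff[OF H(1) h(2,1)] by simp
    then obtain q where q: "j - j' = q * ?k"
      using nsmul_mem_iff_order_mod_dvd[OF H] by (metis dvd_def mult.commute)
    have "c (nsmul (j - j') g) = c (nsmul ?k g) ^ q"
      unfolding q nsmul_mult using circle_hom_on_nsmul[OF H(1) c order_mod(2)[OF H]] .
    also have "\<dots> = z ^ (j - j')"
      unfolding q z[symmetric] by (simp add: power_mult[symmetric] mult.commute)
    finally have "c h' = c h * z ^ (j - j')"
      using \<open>h' = h + nsmul (j - j') g\<close> \<open>nsmul (j - j') g \<in> H\<close> c h(1)
      unfolding circle_hom_on_def by simp
    then show ?thesis
      using \<open>j' \<le> j\<close> by (simp add: power_add[symmetric])
  qed
  show ?thesis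
    using *[OF h eq] *[OF h(2,1) eq[symmetric]] by (cases "j' \<le> j") auto
qed

lemma circle_hom_on_extend_adjoin:
  assumes H: "add_subgroup H" "finite_index H" and c: "circle_hom_on H c"
    and z: "z ^ order_mod H g = c (nsmul (order_mod H g) g)" "norm z = 1"
  obtains c' where "circle_hom_on (add_subgroup_adjoin H g) c'" "\<And>a. a \<in> H \<Longrightarrow> c' a = c a"
    "c' g = z"
proof -
  define c' where "c' x = (THE w. \<exists>h\<in>H. \<exists>j. x = h + nsmul j g \<and> w = c h * z ^ j)" for x
  have c': "c' (h + nsmul j g) = c h * z ^ j" if h: "h \<in> H" for h j
    unfolding c'_def
  proof (rule the_equality)
    show "\<exists>h'\<in>H. \<exists>j'. h + nsmul j g = h' + nsmul j' g \<and> c h * z ^ j = c h' * z ^ j'"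
      using h by blast
  next
    fix w
    assume "\<exists>h'\<in>H. \<exists>j'. h + nsmul j g = h' + nsmul j' g \<and> w = c h' * z ^ j'"
    then obtain h' j' where "h' \<in> H" "h + nsmul j g = h' + nsmul j' g" "w = c h' * z ^ j'"
      by blast
    then show "w = c h * z ^ j"
      using circle_hom_on_adjoin_well_defined[OF H c z(1) h] by simp
  qed
  show thesis
  proof
    show "circle_hom_on (add_subgroup_adjoin H g) c'"
      unfolding circle_hom_on_def
    proof (intro conjI ballI)
      fix x y
      assume "x \<in> add_subgroup_adjoin H g" "y \<in> add_subgroup_adjoin H g"
      then obtain h1 h2 j1 j2 where h: "h1 \<in> H" "h2 \<in> H" "x = h1 + nsmul j1 g" "y = h2 + nsmul j2 g"
        unfolding add_subgroup_adjoin_def by blast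
      have "x + y = (h1 + h2) + nsmul (j1 + j2) g"
        unfolding h nsmul_add by (simp add: algebra_simps)
      then have "c' (x + y) = c (h1 + h2) * z ^ (j1 + j2)"
        using c' add_subgroup_add[OF H(1) h(1,2)] by simp
      also have "\<dots> = (c h1 * z ^ j1) * (c h2 * z ^ j2)"
        using c h(1,2) unfolding circle_hom_on_def by (simp add: power_add)
      finally show "c' (x + y) = c' x * c' y"
        using c' h by simp
    next
      fix x
      assume "x \<in> add_subgroup_adjoin H g"
      then obtain h j where "h \<in> H" "x = h + nsmul j g"
        unfolding add_subgroup_adjoin_def by blast
      then show "norm (c' x) = 1"
        using c' c z(2) unfolding circle_hom_on_def by (simp add: norm_mult norm_power)
    qed
    show "c' a = c a" if "a \<in> H" for a
      using c'[OF that, of 0] by simp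
    show "c' g = z"
      using c'[OF add_subgroup_0[OF H(1)], of 1] circle_hom_on_0[OF H(1) c] by simp
  qed
qed

lemma circle_hom_on_extend_adjoin_any:
  assumes H: "add_subgroup H" "finite_index H" and c: "circle_hom_on H c"
  obtains c' where "circle_hom_on (add_subgroup_adjoin H g) c'" "\<And>a. a \<in> H \<Longrightarrow> c' a = c a"
proof -
  have "norm (c (nsmul (order_mod H g) g)) = 1"
    using c order_mod(2)[OF H] unfolding circle_hom_on_def by blast
  then obtain z where "z ^ order_mod H g = c (nsmul (order_mod H g) g)" "norm z = 1"
    using exists_unimodular_root[OF order_mod(1)[OF H]] by blast
  then show thesis
    using circle_hom_on_extend_adjoin[OF H c] that by blast
qed

lemma add_subgroup_eq_UNIV:
  assumes "add_subgroup H" "R \<subseteq> H" "\<forall>x. \<exists>r\<in>R. x - r \<in> H"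
  shows "H = UNIV"
proof (intro set_eqI iffI)
  fix x
  obtain r where "r \<in> R" "x - r \<in> H"
    using assms(3) by blast
  then have "(x - r) + r \<in> H"
    using assms(1,2) by (intro add_subgroup_add) auto
  then show "x \<in> H"
    by simp
qed simp

lemma circle_hom_on_extend_UNIV:
  assumes "add_subgroup H" "finite_index H" "circle_hom_on H c"
  obtains c' where "circle_hom_on UNIV c'" "\<And>a. a \<in> H \<Longrightarrow> c' a = c a"
proof -
  obtain R where R: "finite R" "\<forall>x. \<exists>r\<in>R. x - r \<in> H"
    using assms(2) unfolding finite_index_def by blast
  have "\<exists>c'. circle_hom_on UNIV c' \<and> (\<forall>a\<in>H. c' a = c a)"
    if "add_subgroup H" "\<forall>x. \<exists>r\<in>R. x - r \<in> H" "circle_hom_on H c" for H c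
    using that
  proof (induction "card (R - H)" arbitrary: H c rule: less_induct)
    case less
    then have H: "add_subgroup H" "finite_index H"
      using R(1) unfolding finite_index_def by blast+
    show ?case
    proof (cases "R \<subseteq> H")
      case True
      then show ?thesis
        using add_subgroup_eq_UNIV[OF H(1) True less.prems(2)] less.prems(3) by blast
    next
      case False
      then obtain g where g: "g \<in> R" "g \<notin> H"
        by blast
      obtain c'' where c'': "circle_hom_on (add_subgroup_adjoin H g) c''" "\<And>a. a \<in> H \<Longrightarrow> c'' a = c a"
        using circle_hom_on_extend_adjoin_any[OF H less.prems(3)] by blast
      have "R - add_subgroup_adjoin H g \<subset> R - H"
        using g subset_add_subgroup_adjoin[of H g] add_subgroup_adjoin_self[OF H(1)] by blast
      then have "card (R - add_subgroup_adjoin H g) < card (R - H)"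
        using R(1) by (intro psubset_card_mono) auto
      moreover have "\<forall>x. \<exists>r\<in>R. x - r \<in> add_subgroup_adjoin H g"
        using less.prems(2) subset_add_subgroup_adjoin[of H g] by blast
      ultimately obtain c' where "circle_hom_on UNIV c'" "\<forall>a\<in>add_subgroup_adjoin H g. c' a = c'' a"
        using less.hyps add_subgroup_adjoin[OF H] c''(1) by blast
      then show ?thesis
        using c''(2) subset_add_subgroup_adjoin[of H g] by (intro exI[of _ c']) auto
    qed
  qed
  then show thesis
    using assms R that by blast
qed

lemma circle_hom_separating:
  assumes U: "add_subgroup U" "finite_index U" and "x \<notin> U"
  obtains c where "circle_hom_on UNIV c" "\<And>u. u \<in> U \<Longrightarrow> c u = 1" "c x \<noteq> 1"
proof -
  let ?k = "order_mod U x"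
  have "\<not> ?k dvd 1"
    using nsmul_mem_iff_order_mod_dvd[OF U, of 1 x] \<open>x \<notin> U\<close> by simp
  then have "2 \<le> ?k"
    using order_mod(1)[OF U, of x] by (cases ?k) auto
  then obtain z :: complex where z: "z ^ ?k = 1" "z \<noteq> 1"
    by (rule exists_nontrivial_root_of_unity)
  then have "norm z = 1"
    using \<open>2 \<le> ?k\<close> norm_eq_1_if_power_eq_1 by (metis norm_one zero_less_numeral less_le_trans)
  have "circle_hom_on U (\<lambda>_. 1)"
    unfolding circle_hom_on_def by simp
  then obtain c' where c': "circle_hom_on (add_subgroup_adjoin U x) c'" "\<And>a. a \<in> U \<Longrightarrow> c' a = 1"
    "c' x = z"
    using circle_hom_on_extend_adjoin[OF U, of "\<lambda>_. 1" z x] z(1) \<open>norm z = 1\<close> by metis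
  obtain c where "circle_hom_on UNIV c" "\<And>a. a \<in> add_subgroup_adjoin U x \<Longrightarrow> c a = c' a"
    using circle_hom_on_extend_UNIV[OF add_subgroup_adjoin[OF U] _ c'(1)]
      finite_index_mono[OF U(2) subset_add_subgroup_adjoin] by blast
  then show thesis
    using that c' z(2) subset_add_subgroup_adjoin[of U x] add_subgroup_adjoin_self[OF U(1), of x]
    by (metis subsetD)
qed

section \<open>Open subgroups of a compact group\<close>

lemma Hausdorff_space_euclidean_t2: "Hausdorff_space (euclidean :: 'a::t2_space topology)"
  unfolding Hausdorff_space_def disjnt_def
proof (intro allI impI)
  fix x y :: 'a
  assume "x \<in> topspace euclidean \<and> y \<in> topspace euclidean \<and> x \<noteq> y"
  then show "\<exists>U V. openin euclidean U \<and> openin euclidean V \<and> x \<in> U \<and> y \<in> V \<and> U \<inter> V = {}"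
    using hausdorff[of x y] by simp
qed

text \<open>In a compact Hausdorff space components coincide with quasi-components.\<close>

lemma compact_Hausdorff_clopen_separation:
  fixes x y :: "'a::t2_space"
  assumes "compact (UNIV :: 'a set)" and "x \<notin> connected_component_set UNIV y"
  obtains T where "open T" "closed T" "y \<in> T" "x \<notin> T"
proof -
  have "compact_space (euclidean :: 'a topology)"
    using assms(1) by (simp add: compact_space_def)
  then have "quasi_component_of euclidean y = connected_component_of euclidean y"
    using Hausdorff_space_euclidean_t2 by (intro quasi_eq_connected_component_of) blast
  moreover have "\<not> connected_component_of euclidean y x"
    using assms(2) by (simp add: connected_component_of_def connected_component_def)
  ultimately have "\<not> quasi_component_of euclidean y x"
    by simp
  then show thesis
    using that by (simp add: quasi_component_of) blast
qed

lemma connected_component_translation: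
  fixes g x :: "'a::topological_group_add"
  shows "(\<lambda>y. g + y) ` connected_component_set UNIV x = connected_component_set UNIV (g + x)"
proof -
  have "homeomorphism UNIV UNIV (\<lambda>y. g + y) (\<lambda>y. - g + y)"
    by (rule homeomorphismI) (auto intro!: continuous_intros simp: add.assoc[symmetric])
  then show ?thesis
    by (rule connected_component_set_homeomorphism[symmetric]) simp
qed

lemma compact_add_neighbourhood:
  fixes K V :: "'a::topological_monoid_add set"
  assumes "compact K" "open V" "K \<subseteq> V"
  obtains W where "open W" "0 \<in> W" "\<And>k w. k \<in> K \<Longrightarrow> w \<in> W \<Longrightarrow> k + w \<in> V"
proof -
  have "open ((\<lambda>p. fst p + snd p) -` V)"
    using assms(2) by (intro open_vimage) (auto intro!: continuous_intros)
  have "\<exists>A B. open A \<and> open B \<and> k \<in> A \<and> 0 \<in> B \<and> (\<forall>a\<in>A. \<forall>b\<in>B. a + b \<in> V)"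
    if "k \<in> K" for k
  proof -
    have "(k, 0) \<in> (\<lambda>p. fst p + snd p) -` V"
      using subsetD[OF assms(3) that] by simp
    then obtain A B where "open A" "open B" "(k, 0) \<in> A \<times> B" "A \<times> B \<subseteq> (\<lambda>p. fst p + snd p) -` V"
      by (rule open_prod_elim[OF \<open>open ((\<lambda>p. fst p + snd p) -` V)\<close>])
    then show ?thesis
      by (intro exI[of _ A] exI[of _ B]) auto
  qed
  then obtain A B where AB: "\<And>k. k \<in> K \<Longrightarrow> open (A k) \<and> open (B k) \<and> k \<in> A k \<and> 0 \<in> B k \<and>
      (\<forall>a\<in>A k. \<forall>b\<in>B k. a + b \<in> V)"
    by metis
  have "K \<subseteq> (\<Union>k\<in>K. A k)"
    using AB by blast
  then obtain F where F: "F \<subseteq> K" "finite F" "K \<subseteq> (\<Union>k\<in>F. A k)"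
    using compactE_image[OF assms(1), of K A] AB by blast
  show thesis
  proof
    show "open (\<Inter>k\<in>F. B k)"
      using F AB by (intro open_INT) auto
    show "0 \<in> (\<Inter>k\<in>F. B k)"
      using F AB by auto
  next
    fix k w
    assume "k \<in> K" "w \<in> (\<Inter>k\<in>F. B k)"
    then obtain k' where "k' \<in> F" "k \<in> A k'" "w \<in> B k'"
      using F(3) by blast
    then show "k + w \<in> V"
      using AB F(1) by blast
  qed
qed

text \<open>The stabiliser of a compact open neighbourhood of \<open>0\<close> is an open subgroup inside it.\<close>

lemma open_add_subgroup_in_compact_open:
  fixes V :: "'a::topological_ab_group_add set"
  assumes "compact V" "open V" "0 \<in> V"
  obtains U where "add_subgroup U" "open U" "U \<subseteq> V"
proof -
  obtain W0 where W0: "open W0" "0 \<in> W0" "\<And>v w. v \<in> V \<Longrightarrow> w \<in> W0 \<Longrightarrow> v + w \<in> V"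
    using compact_add_neighbourhood[OF assms(1,2) order_refl] by blast
  define W where "W = W0 \<inter> uminus -` W0"
  have "open W"
    unfolding W_def using W0(1) by (intro open_Int open_vimage) (auto intro: continuous_intros)
  have W: "v + w \<in> V" "v - w \<in> V" if "v \<in> V" "w \<in> W" for v w
    using W0(3)[OF that(1), of w] W0(3)[OF that(1), of "- w"] that(2) unfolding W_def by auto
  define U where "U = {x. \<forall>v\<in>V. x + v \<in> V \<and> - x + v \<in> V}"
  have "add_subgroup U"
    unfolding add_subgroup_def
  proof (intro conjI ballI)
    fix x y
    assume x: "x \<in> U" and y: "y \<in> U"
    have "x + (- y + v) \<in> V" "- x + (y + v) \<in> V" if "v \<in> V" for v
      using x y that unfolding U_def by blast+
    then show "x - y \<in> U"
      unfolding U_def by (simp add: algebra_simps)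
  qed (simp add: U_def)
  moreover have "U \<subseteq> V"
  proof
    fix x
    assume "x \<in> U"
    then have "x + 0 \<in> V"
      using assms(3) unfolding U_def by blast
    then show "x \<in> V"
      by simp
  qed
  moreover have "open U"
  proof (subst open_subopen, intro ballI)
    fix x
    assume x: "x \<in> U"
    let ?T = "(\<lambda>y. y - x) -` W"
    have "?T \<subseteq> U"
    proof
      fix y
      assume "y \<in> ?T"
      then have "x + (v + (y - x)) \<in> V" "- x + (v - (y - x)) \<in> V" if "v \<in> V" for v
        using x W[OF that] unfolding U_def by blast+
      then show "y \<in> U"
        unfolding U_def by (simp add: algebra_simps)
    qed
    moreover have "open ?T"
      using \<open>open W\<close> by (intro open_vimage) (auto intro: continuous_intros)
    moreover have "x \<in> ?T"
      using W0(2) unfolding W_def by simp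
    ultimately show "\<exists>T. open T \<and> x \<in> T \<and> T \<subseteq> U"
      by blast
  qed
  ultimately show thesis
    using that by blast
qed

lemma open_add_subgroup_separating:
  fixes x y :: "'a::{topological_ab_group_add, t2_space}"
  assumes "compact (UNIV :: 'a set)"
    and "connected_component_set UNIV x \<noteq> connected_component_set UNIV y"
  obtains U where "add_subgroup U" "open U" "x - y \<notin> U"
proof -
  have "x \<notin> connected_component_set UNIV y"
    using assms(2) connected_component_eq by blast
  then obtain T where T: "open T" "closed T" "y \<in> T" "x \<notin> T"
    using compact_Hausdorff_clopen_separation[OF assms(1)] by blast
  define T' where "T' = (\<lambda>z. z + y) -` T"
  have "open T'" "closed T'"
    unfolding T'_def using T by (auto intro!: open_vimage closed_vimage continuous_intros)
  then have "compact T'"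
    using assms(1) compact_Int_closed[of UNIV T'] by simp
  moreover have "0 \<in> T'" "x - y \<notin> T'"
    using T unfolding T'_def by auto
  ultimately show thesis
    using open_add_subgroup_in_compact_open[of T'] \<open>open T'\<close> that by blast
qed

lemma infinite_range_imp_inj_on_card:
  assumes "infinite (range f)"
  shows "\<exists>R. finite R \<and> card R = N \<and> inj_on f R"
proof -
  obtain Q where Q: "Q \<subseteq> range f" "finite Q" "card Q = N"
    using infinite_arbitrarily_large[OF assms] by blast
  have "inj_on (inv f) Q"
    using Q(1) inj_on_inv_into by blast
  moreover have "f (inv f q) = q" if "q \<in> Q" for q
    using Q(1) that by (simp add: f_inv_into_f subset_iff)
  then have "inj_on f (inv f ` Q)"
    by (intro inj_onI) auto
  ultimately show ?thesis
    using Q by (intro exI[of _ "inv f ` Q"]) (simp add: card_image)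
qed

lemma open_add_subgroup_many_cosets:
  fixes N :: nat
  assumes "compact (UNIV :: 'a set)" and "infinite (range (connected_component_set (UNIV :: 'a set)))"
  obtains U R :: "'a::{topological_ab_group_add, t2_space} set"
  where "add_subgroup U" "open U" "finite R" "card R = N"
    "\<And>r r'. r \<in> R \<Longrightarrow> r' \<in> R \<Longrightarrow> r \<noteq> r' \<Longrightarrow> r - r' \<notin> U"
proof -
  obtain R :: "'a set" where R: "finite R" "card R = N"
    and inj: "inj_on (connected_component_set UNIV) R"
    using infinite_range_imp_inj_on_card[OF assms(2), of N] by blast
  define P where "P = {(r, r'). r \<in> R \<and> r' \<in> R \<and> r \<noteq> r'}"
  have "P \<subseteq> R \<times> R"
    unfolding P_def by auto
  then have "finite P"
    by (rule finite_subset) (simp add: R(1))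
  have separating: "\<forall>p\<in>P. \<exists>U. add_subgroup U \<and> open U \<and> fst p - snd p \<notin> U"
  proof
    fix p
    assume "p \<in> P"
    obtain r r' where p: "p = (r, r')" "r \<in> R" "r' \<in> R" "r \<noteq> r'"
      using \<open>p \<in> P\<close> unfolding P_def by blast
    then have components_ne: "connected_component_set UNIV r \<noteq> connected_component_set UNIV r'"
      using inj_onD[OF inj] by blast
    obtain U where "add_subgroup U" "open U" "r - r' \<notin> U"
      using open_add_subgroup_separating[OF assms(1) components_ne] by blast
    then show "\<exists>U. add_subgroup U \<and> open U \<and> fst p - snd p \<notin> U"
      using p(1) by auto
  qed
  obtain Us where Us: "\<forall>p\<in>P. add_subgroup (Us p) \<and> open (Us p) \<and> fst p - snd p \<notin> Us p"
    using bchoice[OF separating] by blast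
  show thesis
  proof (rule that[of "\<Inter>(Us ` P)" R])
    show "add_subgroup (\<Inter>(Us ` P))"
      using Us by (intro add_subgroup_Inter) auto
    show "open (\<Inter>(Us ` P))"
      using Us \<open>finite P\<close> by (intro open_INT) auto
    show "r - r' \<notin> \<Inter>(Us ` P)" if "r \<in> R" "r' \<in> R" "r \<noteq> r'" for r r'
    proof -
      have "(r, r') \<in> P"
        using that unfolding P_def by simp
      then show ?thesis
        using Us by fastforce
    qed
  qed (use R in auto)
qed

lemma compact_open_finite_index:
  fixes U :: "'a::topological_ab_group_add set"
  assumes "compact (UNIV :: 'a set)" "open U" "0 \<in> U"
  shows "finite_index U"
proof -
  have "open ((\<lambda>x. x - r) -` U)" for r
    using assms(2) by (intro open_vimage) (auto intro: continuous_intros)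
  moreover have "UNIV \<subseteq> (\<Union>r. (\<lambda>x. x - r) -` U)"
  proof
    fix x :: 'a
    have "x \<in> (\<lambda>y. y - x) -` U"
      using assms(3) by simp
    then show "x \<in> (\<Union>r. (\<lambda>x. x - r) -` U)"
      by blast
  qed
  ultimately obtain R where "finite R" "UNIV \<subseteq> (\<Union>r\<in>R. (\<lambda>x. x - r) -` U)"
    using compactE_image[OF assms(1)] by (metis top_greatest)
  then show ?thesis
    unfolding finite_index_def by blast
qed

section \<open>Characters trivial on an open subgroup\<close>

lemma character_iff_circle_hom: "character c \<longleftrightarrow> continuous_on UNIV c \<and> circle_hom_on UNIV c"
  unfolding character_def circle_hom_on_def by blast

lemma character_one: "character (\<lambda>_. 1)"
  unfolding character_def by simp

lemma character_mult: "character c1 \<Longrightarrow> character c2 \<Longrightarrow> character (\<lambda>x. c1 x * c2 x)"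
  unfolding character_def by (auto intro: continuous_on_mult simp: norm_mult)

lemma character_if_trivial_near_0:
  fixes c :: "'a::topological_ab_group_add \<Rightarrow> complex"
  assumes c: "circle_hom_on UNIV c" and U: "open U" "0 \<in> U" "\<And>u. u \<in> U \<Longrightarrow> c u = 1"
  shows "character c"
proof -
  have "continuous_on UNIV c"
    unfolding continuous_on_topological
  proof (intro ballI allI impI)
    fix x B
    assume "c x \<in> B"
    have "open ((\<lambda>y. y - x) -` U)"
      using U(1) by (intro open_vimage) (auto intro: continuous_intros)
    moreover have "x \<in> (\<lambda>y. y - x) -` U"
      using U(2) by simp
    moreover have "c y \<in> B" if "y - x \<in> U" for y
    proof -
      have "c (x + (y - x)) = c x * c (y - x)"
        using c unfolding circle_hom_on_def by blast
      then show ?thesis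
        using U(3)[OF that] \<open>c x \<in> B\<close> by simp
    qed
    ultimately show "\<exists>A. open A \<and> x \<in> A \<and> (\<forall>y\<in>UNIV. y \<in> A \<longrightarrow> c y \<in> B)"
      by blast
  qed
  then show ?thesis
    using c unfolding character_iff_circle_hom by simp
qed

definition annihilator :: "'a::topological_ab_group_add set \<Rightarrow> ('a \<Rightarrow> complex) set" where
  "annihilator U = {c. character c \<and> (\<forall>u\<in>U. c u = 1)}"

lemma one_in_annihilator: "(\<lambda>_. 1) \<in> annihilator U"
  unfolding annihilator_def by (simp add: character_one)

lemma finite_annihilator:
  assumes U: "add_subgroup U" "finite_index U"
  shows "finite (annihilator U)"
proof -
  obtain R where R: "finite R" "\<forall>x. \<exists>r\<in>R. x - r \<in> U"
    using U(2) unfolding finite_index_def by blast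
  have hom: "circle_hom_on UNIV c" if "c \<in> annihilator U" for c
    using that unfolding annihilator_def character_iff_circle_hom by blast
  have coset: "c x = c r" if "c \<in> annihilator U" "x - r \<in> U" for c x r
  proof -
    have "c (r + (x - r)) = c r * c (x - r)"
      using hom[OF that(1)] unfolding circle_hom_on_def by blast
    then show ?thesis
      using that unfolding annihilator_def by simp
  qed
  have roots: "c r ^ order_mod U r = 1" if "c \<in> annihilator U" for c r
  proof -
    have "c r ^ order_mod U r = c (nsmul (order_mod U r) r)"
      using circle_hom_on_nsmul[OF add_subgroup_UNIV hom[OF that]] by simp
    also have "\<dots> = 1"
      using that order_mod(2)[OF U] unfolding annihilator_def by blast
    finally show ?thesis .
  qed
  have "inj_on (\<lambda>c. restrict c R) (annihilator U)"
  proof (rule inj_onI, rule ext)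
    fix c1 c2 x
    assume c: "c1 \<in> annihilator U" "c2 \<in> annihilator U" "restrict c1 R = restrict c2 R"
    obtain r where r: "r \<in> R" "x - r \<in> U"
      using R(2) by blast
    then have "c1 r = c2 r"
      using c(3) by (metis restrict_apply')
    then show "c1 x = c2 x"
      using coset[OF c(1) r(2)] coset[OF c(2) r(2)] by simp
  qed
  moreover have "(\<lambda>c. restrict c R) ` annihilator U \<subseteq> (\<Pi>\<^sub>E r\<in>R. {z. z ^ order_mod U r = 1})"
    using roots by auto
  moreover have "finite (\<Pi>\<^sub>E r\<in>R. {z :: complex. z ^ order_mod U r = 1})"
    using R(1) order_mod(1)[OF U] by (intro finite_PiE finite_roots_unity) (simp_all add: Suc_le_eq)
  ultimately show ?thesis
    using finite_imageD finite_subset by blast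
qed

text \<open>Multiplication by \<open>\<psi>\<close> permutes \<open>G\<close>.\<close>

lemma sum_mult_invariant_eq_0:
  fixes G :: "('a \<Rightarrow> 'b::field) set"
  assumes "finite G" "\<And>c. c \<in> G \<Longrightarrow> (\<lambda>y. \<psi> y * c y) \<in> G" "\<And>y. \<psi> y \<noteq> 0" "\<psi> x \<noteq> 1"
  shows "(\<Sum>c\<in>G. c x) = 0"
proof -
  let ?f = "\<lambda>c y. \<psi> y * c y"
  have inj: "inj_on ?f G"
    using assms(3) by (intro inj_onI) (simp add: fun_eq_iff)
  then have "?f ` G = G"
    using assms(1,2) by (intro endo_inj_surj) auto
  then have "(\<Sum>c\<in>G. c x) = (\<Sum>c\<in>G. \<psi> x * c x)"
    using sum.reindex[OF inj, of "\<lambda>c. c x"] by simp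
  also have "\<dots> = \<psi> x * (\<Sum>c\<in>G. c x)"
    by (simp add: sum_distrib_left)
  finally show ?thesis
    using assms(4) by (metis mult_cancel_right1)
qed

lemma sum_annihilator:
  fixes U :: "'a::topological_ab_group_add set"
  assumes U: "add_subgroup U" "finite_index U" "open U"
  shows "(\<Sum>c\<in>annihilator U. c x) = of_real (real (card (annihilator U)) * indicator U x)"
proof (cases "x \<in> U")
  case True
  then have "(\<Sum>c\<in>annihilator U. c x) = (\<Sum>c\<in>annihilator U. 1)"
    unfolding annihilator_def by (intro sum.cong) auto
  then show ?thesis
    using True by simp
next
  case False
  obtain \<psi> where \<psi>: "circle_hom_on UNIV \<psi>" "\<And>u. u \<in> U \<Longrightarrow> \<psi> u = 1" "\<psi> x \<noteq> 1"
    using circle_hom_separating[OF U(1,2) False] by blast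
  then have "\<psi> \<in> annihilator U"
    using U(3) add_subgroup_0[OF U(1)] unfolding annihilator_def
    by (blast intro: character_if_trivial_near_0)
  have "(\<Sum>c\<in>annihilator U. c x) = 0"
  proof (rule sum_mult_invariant_eq_0[where \<psi> = \<psi>])
    show "finite (annihilator U)"
      using finite_annihilator[OF U(1,2)] .
    show "\<psi> x \<noteq> 1"
      by fact
    show "(\<lambda>y. \<psi> y * c y) \<in> annihilator U" if "c \<in> annihilator U" for c
      using that \<open>\<psi> \<in> annihilator U\<close> unfolding annihilator_def by (auto intro: character_mult)
    show "\<psi> y \<noteq> 0" for y
    proof -
      have "norm (\<psi> y) = 1"
        using \<psi>(1) unfolding circle_hom_on_def by blast
      then show ?thesis
        by auto
    qed
  qed
  then show ?thesis
    using False by simp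
qed

section \<open>Haar measure\<close>

lemma haar_prob_space: "haar_prob M \<Longrightarrow> prob_space M"
  unfolding haar_prob_def by blast

lemma sets_haar_prob: "haar_prob M \<Longrightarrow> sets M = sets borel"
  unfolding haar_prob_def by blast

lemma space_haar_prob: "haar_prob M \<Longrightarrow> space M = UNIV"
  using sets_eq_imp_space_eq[OF sets_haar_prob] by simp

lemma measure_translation_haar:
  "haar_prob M \<Longrightarrow> A \<in> sets borel \<Longrightarrow> measure M ((\<lambda>x. g + x) ` A) = measure M A"
  unfolding haar_prob_def by blast

lemma continuous_measurable_haar:
  fixes f :: "'a::topological_ab_group_add \<Rightarrow> 'b::topological_space"
  assumes "haar_prob M" "continuous_on UNIV f"
  shows "f \<in> borel_measurable M"
proof -
  have "borel_measurable M = (borel_measurable borel :: ('a \<Rightarrow> 'b) set)"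
    by (rule measurable_cong_sets) (simp_all add: sets_haar_prob[OF assms(1)])
  then show ?thesis
    using assms(2) by (simp add: borel_measurable_continuous_onI)
qed

lemma translation_measurable_haar:
  assumes "haar_prob M"
  shows "(\<lambda>x. g + x) \<in> measurable M M"
proof -
  have "(\<lambda>x. g + x) \<in> borel_measurable borel"
    by (intro borel_measurable_continuous_onI continuous_intros)
  then show ?thesis
    using measurable_cong_sets[OF sets_haar_prob[OF assms] sets_haar_prob[OF assms]] by simp
qed

lemma translation_eq_vimage: "(\<lambda>x. g + x) ` A = (\<lambda>x. x - g) -` (A :: 'a::ab_group_add set)"
  by force

lemma distr_translation_haar:
  fixes M :: "'a::topological_ab_group_add measure"
  assumes M: "haar_prob M"
  shows "distr M M (\<lambda>x. g + x) = M"
proof -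
  interpret prob_space M
    using haar_prob_space[OF M] .
  show ?thesis
  proof (rule measure_eqI)
    fix A
    assume "A \<in> sets (distr M M (\<lambda>x. g + x))"
    then have A: "A \<in> sets M" "A \<in> sets borel"
      using sets_haar_prob[OF M] by simp_all
    have "(\<lambda>x. g + x) -` A \<inter> space M = (\<lambda>x. - g + x) ` A"
      unfolding space_haar_prob[OF M] translation_eq_vimage by (simp add: add.commute)
    then show "emeasure (distr M M (\<lambda>x. g + x)) A = emeasure M A"
      using emeasure_distr[OF translation_measurable_haar[OF M] A(1)]
        measure_translation_haar[OF M A(2)] emeasure_eq_measure by metis
  qed simp
qed

lemma integrable_character_haar:
  assumes M: "haar_prob M" and c: "character c"
  shows "integrable M c"
proof -
  interpret prob_space M
    using haar_prob_space[OF M] .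
  have "c \<in> borel_measurable M"
    using c continuous_measurable_haar[OF M] unfolding character_def by blast
  then show ?thesis
    using c unfolding character_def by (intro integrable_const_bound[where B = 1]) auto
qed

lemma integral_character_haar:
  assumes M: "haar_prob M" and c: "character c"
  shows "(\<integral>x. c x \<partial>M) = (if c = (\<lambda>_. 1) then 1 else 0)"
proof -
  interpret prob_space M
    using haar_prob_space[OF M] .
  have "(\<integral>x. c x \<partial>M) = 0" if "c g \<noteq> 1" for g
  proof -
    have "c \<in> borel_measurable M"
      using c continuous_measurable_haar[OF M] unfolding character_def by blast
    then have "(\<integral>x. c x \<partial>M) = (\<integral>x. c (g + x) \<partial>M)"
      using integral_distr[OF translation_measurable_haar[OF M]] distr_translation_haar[OF M] by metis
    also have "\<dots> = c g * (\<integral>x. c x \<partial>M)"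
      using c unfolding character_def by simp
    finally show ?thesis
      using that by (metis mult_cancel_right1)
  qed
  then show ?thesis
    by (auto simp: fun_eq_iff prob_space)
qed

lemma card_annihilator_mult_measure:
  assumes M: "haar_prob M" and U: "add_subgroup U" "finite_index U" "open U"
  shows "real (card (annihilator U)) * measure M U = 1"
proof -
  interpret prob_space M
    using haar_prob_space[OF M] .
  have "U \<in> sets M"
    using U(3) sets_haar_prob[OF M] by simp
  have chars: "\<And>c. c \<in> annihilator U \<Longrightarrow> character c"
    unfolding annihilator_def by blast
  have "complex_of_real (real (card (annihilator U)) * measure M U)
      = (\<integral>x. (\<Sum>c\<in>annihilator U. c x) \<partial>M)"
    using \<open>U \<in> sets M\<close> space_haar_prob[OF M] by (simp add: sum_annihilator[OF U])
  also have "\<dots> = (\<Sum>c\<in>annihilator U. \<integral>x. c x \<partial>M)"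
    using integrable_character_haar[OF M chars] by (simp add: Bochner_Integration.integral_sum)
  also have "\<dots> = (\<Sum>c\<in>annihilator U. if c = (\<lambda>_. 1) then 1 else 0)"
    using integral_character_haar[OF M chars] by simp
  also have "\<dots> = 1"
    using finite_annihilator[OF U(1,2)] one_in_annihilator by simp
  finally show ?thesis
    by (metis of_real_eq_1_iff)
qed

lemma card_incongruent_mult_measure_le_1:
  assumes M: "haar_prob M" and U: "add_subgroup U" "open U" and "finite R"
    and R: "\<And>r r'. r \<in> R \<Longrightarrow> r' \<in> R \<Longrightarrow> r \<noteq> r' \<Longrightarrow> r - r' \<notin> U"
  shows "real (card R) * measure M U \<le> 1"
proof -
  interpret prob_space M
    using haar_prob_space[OF M] .
  define T where "T r = (\<lambda>x. r + x) ` U" for r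
  have "open ((\<lambda>x. x - r) -` U)" for r
    using U(2) by (intro open_vimage) (auto intro: continuous_intros)
  then have T: "T r \<in> sets M" "measure M (T r) = measure M U" for r
    using U(2) sets_haar_prob[OF M] measure_translation_haar[OF M]
    by (simp_all add: T_def translation_eq_vimage)
  have "disjoint_family_on T R"
    unfolding disjoint_family_on_def
  proof (intro ballI impI, rule ccontr)
    fix r r'
    assume "r \<in> R" "r' \<in> R" "r \<noteq> r'" "T r \<inter> T r' \<noteq> {}"
    then obtain u u' where "u \<in> U" "u' \<in> U" "r + u = r' + u'"
      unfolding T_def by blast
    then have "r - r' \<in> U"
      using add_subgroup_diff[OF U(1), of u' u] by (metis add_diff_cancel_left' add_diff_eq diff_add_eq_diff_diff_swap diff_diff_eq2)
    then show False
      using R \<open>r \<in> R\<close> \<open>r' \<in> R\<close> \<open>r \<noteq> r'\<close> by blast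
  qed
  then have "measure M (\<Union>r\<in>R. T r) = (\<Sum>r\<in>R. measure M (T r))"
    using \<open>finite R\<close> T(1) by (intro measure_finite_Union) (auto simp: emeasure_finite)
  also have "\<dots> = real (card R) * measure M U"
    using T(2) by simp
  finally have "measure M (\<Union>r\<in>R. T r) = real (card R) * measure M U" .
  then show ?thesis
    using prob_le_1 by metis
qed

section \<open>Small Mahler measures\<close>

lemma card_le_card_annihilator:
  fixes M :: "'a::topological_ab_group_add measure" and U :: "'a set"
  assumes M: "haar_prob M" and U: "add_subgroup U" "finite_index U" "open U" and "finite R"
    and R: "\<And>r r'. r \<in> R \<Longrightarrow> r' \<in> R \<Longrightarrow> r \<noteq> r' \<Longrightarrow> r - r' \<notin> U"
  shows "card R \<le> card (annihilator U)"
proof -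
  have n: "real (card (annihilator U)) * measure M U = 1"
    using card_annihilator_mult_measure[OF M U] .
  then have "0 < measure M U"
    using measure_nonneg[of M U] by (metis less_eq_real_def mult_zero_right zero_neq_one)
  moreover have "real (card R) * measure M U \<le> real (card (annihilator U)) * measure M U"
    using card_incongruent_mult_measure_le_1[OF M U(1,3) \<open>finite R\<close> R] n by simp
  ultimately show ?thesis
    by simp
qed

lemma mahler_one_plus_indicator:
  assumes "finite_measure M" "U \<in> sets M" "0 \<le> a"
  shows "mahler M (\<lambda>x. 1 + of_real (a * indicator U x)) = ereal (ln (1 + a) * measure M U)"
proof -
  interpret finite_measure M
    by fact
  have real_valued:
    "1 + complex_of_real (a * indicator U x) = complex_of_real (1 + a * indicator U x)" for x
    by simp
  have pos: "0 < 1 + a * indicator U x" for x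
    using assms(3) by (simp add: indicator_def)
  have "ln (norm (1 + complex_of_real (a * indicator U x))) = ln (1 + a) * indicator U x" for x
    unfolding real_valued norm_of_real using pos[of x] by (simp add: indicator_def)
  moreover have "1 + complex_of_real (a * indicator U x) \<noteq> 0" for x
    unfolding real_valued of_real_eq_0_iff using pos[of x] by simp
  moreover have "integrable M (\<lambda>x. ln (1 + a) * indicator U x)"
    using assms(2) by (intro integrable_mult_right integrable_real_indicator)
      (simp_all add: less_top[symmetric] emeasure_finite)
  ultimately show ?thesis
    unfolding mahler_def using assms(2) by (simp add: sets.Int_space_eq2)
qed

lemma one_plus_sum_characters_in_int_char_poly:
  assumes "finite G" "(\<lambda>_. 1) \<in> G" "\<And>c. c \<in> G \<Longrightarrow> character c"
  shows "(\<lambda>x. 1 + (\<Sum>c\<in>G. c x)) \<in> int_char_poly"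
proof -
  define m :: "('a \<Rightarrow> complex) \<Rightarrow> int" where "m c = (if c = (\<lambda>_. 1) then 2 else 1)" for c
  have delta: "(\<Sum>c\<in>G. if c = (\<lambda>_. 1) then 1 else 0) = (1 :: complex)"
    unfolding sum.delta[OF assms(1)] using assms(2) by simp
  have "(\<Sum>c\<in>G. of_int (m c) * c x) = 1 + (\<Sum>c\<in>G. c x)" for x
  proof -
    have "(\<Sum>c\<in>G. of_int (m c) * c x) = (\<Sum>c\<in>G. c x) + (\<Sum>c\<in>G. if c = (\<lambda>_. 1) then 1 else 0)"
      unfolding m_def sum.distrib[symmetric] by (intro sum.cong) auto
    then show ?thesis
      using delta by simp
  qed
  then show ?thesis
    unfolding int_char_poly_def using assms(1,3)
    by (intro CollectI exI[of _ G] exI[of _ m]) (simp add: fun_eq_iff)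
qed

lemma mahler_one_plus_sum_annihilator:
  assumes M: "haar_prob M" and U: "add_subgroup U" "finite_index U" "open U"
  defines "n \<equiv> card (annihilator U)"
  shows "mahler M (\<lambda>x. 1 + (\<Sum>c\<in>annihilator U. c x)) = ereal (ln (1 + real n) / real n)"
proof -
  have "U \<in> sets M"
    using U(3) sets_haar_prob[OF M] by simp
  moreover have "measure M U = 1 / real n"
    using card_annihilator_mult_measure[OF M U] unfolding n_def[symmetric]
    by (cases "n = 0") (simp_all add: field_simps)
  ultimately show ?thesis
    using mahler_one_plus_indicator[of M U "real n"] prob_space.finite_measure[OF haar_prob_space[OF M]]
    by (simp add: sum_annihilator[OF U] n_def)
qed

lemma lehmer_const_eq_0I:
  assumes "\<And>N. \<exists>f n. f \<in> int_char_poly \<and> N \<le> n \<and> 0 < n \<and>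
    mahler M f = ereal (ln (1 + real n) / real n)"
  shows "lehmer_const M = 0"
proof -
  let ?S = "{mahler M f |f. f \<in> int_char_poly \<and> mahler M f > 0}"
  have lim: "(\<lambda>n. ln (1 + real n) / real n) \<longlonglongrightarrow> 0"
    by real_asymp
  have small: "Inf ?S \<le> ereal e" if e: "0 < e" for e
  proof -
    have "eventually (\<lambda>n. ln (1 + real n) / real n < e) sequentially"
      using order_tendstoD(2)[OF lim e] .
    then obtain N where N: "\<And>n. N \<le> n \<Longrightarrow> ln (1 + real n) / real n < e"
      unfolding eventually_sequentially by blast
    obtain f n where f: "f \<in> int_char_poly" "N \<le> n" "0 < n"
      "mahler M f = ereal (ln (1 + real n) / real n)"
      using assms by blast
    have "0 < ln (1 + real n) / real n"
      using f(3) by (intro divide_pos_pos) auto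
    then have "mahler M f > 0"
      using f(4) by simp
    then have "mahler M f \<in> ?S"
      using f(1) by (auto intro!: exI[of _ f])
    then have "Inf ?S \<le> mahler M f"
      by (rule Inf_lower)
    also have "\<dots> \<le> ereal e"
      using N[OF f(2)] f(4) by simp
    finally show ?thesis .
  qed
  have "Inf ?S \<le> 0"
    by (rule ereal_le_epsilon2) (simp add: small)
  moreover have "0 \<le> Inf ?S"
    by (rule Inf_greatest) auto
  ultimately show ?thesis
    unfolding lehmer_const_def by (rule antisym)
qed

theorem theorem5p1:
  fixes M :: "'a::{topological_ab_group_add, t2_space} measure"
  assumes "compact (UNIV :: 'a set)"
    and "haar_prob M"
    and "infinite ((\<lambda>g. (\<lambda>x. g + x) ` connected_component_set UNIV (0::'a)) ` UNIV)"
  shows "lehmer_const M = 0"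
proof (rule lehmer_const_eq_0I)
  fix N
  have "infinite (range (connected_component_set (UNIV :: 'a set)))"
    using assms(3) by (simp add: connected_component_translation)
  then obtain U R :: "'a set" where U: "add_subgroup U" "open U" and R: "finite R" "card R = N"
    "\<And>r r'. r \<in> R \<Longrightarrow> r' \<in> R \<Longrightarrow> r \<noteq> r' \<Longrightarrow> r - r' \<notin> U"
    using open_add_subgroup_many_cosets[OF assms(1), of N] by metis
  have index: "finite_index U"
    using compact_open_finite_index[OF assms(1) U(2) add_subgroup_0[OF U(1)]] .
  let ?f = "\<lambda>x. 1 + (\<Sum>c\<in>annihilator U. c x)" and ?n = "card (annihilator U)"
  have "?f \<in> int_char_poly"
    using finite_annihilator[OF U(1) index] one_in_annihilator
    by (rule one_plus_sum_characters_in_int_char_poly) (simp add: annihilator_def)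
  moreover have "N \<le> ?n"
    using card_le_card_annihilator[OF assms(2) U(1) index U(2) R(1,3)] R(2) by simp
  moreover have "0 < ?n"
    using finite_annihilator[OF U(1) index] one_in_annihilator by (auto simp: card_gt_0_iff)
  moreover have "mahler M ?f = ereal (ln (1 + real ?n) / real ?n)"
    by (rule mahler_one_plus_sum_annihilator[OF assms(2) U(1) index U(2)])
  ultimately show "\<exists>f n. f \<in> int_char_poly \<and> N \<le> n \<and> 0 < n \<and>
      mahler M f = ereal (ln (1 + real n) / real n)"
    by blast
qed

end
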